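(* Let $X=(X_n:n\ge 0)$ be an irreducible positive recurrent Markov chain on a countable state space $S$ with one-step transition matrix $P=(P(x,y):x,y\in S)$ and (unique) stationary distribution $\pi$. Fix $z\in S$, and let $(A_n:n\ge 1)$ be a sequence of finite subsets of $S$ with $z\in A_1$, $A_n\subseteq A_{n+1}$ for all $n$, and $\bigcup_n A_n=S$. Let $\tilde\pi_n$ be the truncation approximation associated with the truncation set $A_n$ (as defined in the context). Then for each $x\in S$, $\tilde\pi_n(x)\to\pi(x)$ as $n\to\infty$.
   Context: Truncation approximation: for a finite set $A\subseteq S$ with $z\in A$, put $A'=A\setminus\{z\}$ and define the row vector $\tilde\nu=(\tilde\nu(x):x\in A')$ with $\tilde\nu(x)=P(z,x)$, the column vector $\tilde e=(\tilde e(x):x\in A')$ with $\tilde e(x)=1$, and the matrix $\tilde B=(\tilde B(x,y):x,y\in A')$ with $\tilde B(x,y)=P(x,y)$. (By irreducibility, $I-\tilde B$ is nonsingular.) The truncation approximation $\tilde\pi$ is the probability vector on $S$ given by $\tilde\pi(x)=\dfrac{(\tilde\nu(I-\tilde B)^{-1})(x)}{1+\tilde\nu(I-\tilde B)^{-1}\tilde e}$ for $x\in A'$, $\tilde\pi(z)=\left(1+\tilde\nu(I-\tilde B)^{-1}\tilde e\right)^{-1}$, and $\tilde\pi(y)=0$ for $y\in S\setminus A$. Here $\tilde\pi_n$ denotes this object with $A=A_n$. *)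

theory Defs
  imports "HOL-Analysis.Analysis"
begin

text \<open>Markov chains on a countable state space, modelled as a countable type 'a
  (the state space S is UNIV); transition matrix P :: 'a => 'a => real.\<close>

definition stochastic_matrix :: "('a \<Rightarrow> 'a \<Rightarrow> real) \<Rightarrow> bool" where
  "stochastic_matrix P \<longleftrightarrow> (\<forall>x y. 0 \<le> P x y) \<and> (\<forall>x. (P x has_sum 1) UNIV)"

fun mpow :: "('a \<Rightarrow> 'a \<Rightarrow> real) \<Rightarrow> nat \<Rightarrow> 'a \<Rightarrow> 'a \<Rightarrow> real" where
  "mpow P 0 x y = (if x = y then 1 else 0)"
| "mpow P (Suc n) x y = (\<Sum>\<^sub>\<infinity>w. mpow P n x w * P w y)"

definition irreducible_chain :: "('a \<Rightarrow> 'a \<Rightarrow> real) \<Rightarrow> bool" where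
  "irreducible_chain P \<longleftrightarrow> (\<forall>x y. \<exists>n. mpow P n x y > 0)"

text \<open>taboo probabilities: avoid x n w = P_x(X_1 \<noteq> x, ..., X_n \<noteq> x, X_n = w)
  (for n = 0 this is the indicator of w = x).\<close>
fun avoid :: "('a \<Rightarrow> 'a \<Rightarrow> real) \<Rightarrow> 'a \<Rightarrow> nat \<Rightarrow> 'a \<Rightarrow> real" where
  "avoid P x 0 w = (if w = x then 1 else 0)"
| "avoid P x (Suc n) w = (if w = x then 0 else (\<Sum>\<^sub>\<infinity>u. avoid P x n u * P u w))"

text \<open>first_return P x n = P_x(\<tau>_x = Suc n), \<tau>_x = inf {m \<ge> 1. X_m = x}.\<close>
definition first_return :: "('a \<Rightarrow> 'a \<Rightarrow> real) \<Rightarrow> 'a \<Rightarrow> nat \<Rightarrow> real" where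
  "first_return P x n = (\<Sum>\<^sub>\<infinity>u. avoid P x n u * P u x)"

text \<open>x is positive recurrent: P_x(\<tau>_x < \<infinity>) = 1 and E_x \<tau>_x < \<infinity>.\<close>
definition positive_recurrent_state :: "('a \<Rightarrow> 'a \<Rightarrow> real) \<Rightarrow> 'a \<Rightarrow> bool" where
  "positive_recurrent_state P x \<longleftrightarrow>
     (first_return P x sums 1) \<and> summable (\<lambda>n. real (Suc n) * first_return P x n)"

definition positive_recurrent_chain :: "('a \<Rightarrow> 'a \<Rightarrow> real) \<Rightarrow> bool" where
  "positive_recurrent_chain P \<longleftrightarrow> (\<forall>x. positive_recurrent_state P x)"

definition stationary_distribution :: "('a \<Rightarrow> 'a \<Rightarrow> real) \<Rightarrow> ('a \<Rightarrow> real) \<Rightarrow> bool" where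
  "stationary_distribution P \<pi> \<longleftrightarrow>
     (\<forall>x. 0 \<le> \<pi> x) \<and> (\<pi> has_sum 1) UNIV \<and> (\<forall>y. \<pi> y = (\<Sum>\<^sub>\<infinity>x. \<pi> x * P x y))"

definition inv_I_minus :: "'a set \<Rightarrow> ('a \<Rightarrow> 'a \<Rightarrow> real) \<Rightarrow> 'a \<Rightarrow> 'a \<Rightarrow> real" where
  "inv_I_minus I B = (THE M.
      (\<forall>x\<in>I. \<forall>y\<in>I. (\<Sum>u\<in>I. ((if x = u then 1 else 0) - B x u) * M u y) = (if x = y then 1 else 0)) \<and>
      (\<forall>x\<in>I. \<forall>y\<in>I. (\<Sum>u\<in>I. M x u * ((if u = y then 1 else 0) - B u y)) = (if x = y then 1 else 0)) \<and>
      (\<forall>x y. (x \<notin> I \<or> y \<notin> I) \<longrightarrow> M x y = 0))"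

definition trunc_approx :: "('a \<Rightarrow> 'a \<Rightarrow> real) \<Rightarrow> 'a \<Rightarrow> 'a set \<Rightarrow> 'a \<Rightarrow> real" where
  "trunc_approx P z A x =
     (let A' = A - {z};
          M = inv_I_minus A' P;
          w = (\<lambda>y. \<Sum>u\<in>A'. P z u * M u y);
          c = 1 + (\<Sum>y\<in>A'. w y)
      in if x = z then 1 / c else if x \<in> A' then w x / c else 0)"

end

theory Submission
  imports Defs "Jordan_Normal_Form.Determinant"
begin

(* Write B for the restriction of P to A - {z} and \<nu> for the row P(z, -).  A minimum principle
   (a superharmonic function on A - {z} cannot have a negative minimum, since by irreducibility the
   minimum would spread to z) shows that I - B is invertible with a nonnegative inverse.  The row
   \<nu> (I - B)^-1, extended by 1 at z, is then the minimal solution of w(y) >= sum_{u in A} w(u) P(u, y)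
   on A - {z} with w(z) = 1.  Hence it increases with A and stays below the invariant measure
   \<pi> / \<pi>(z).  Its limit h along A_n is subinvariant off z and equals 1 at z, so the gap
   \<pi> / \<pi>(z) - h is a superinvariant measure of finite mass, thus invariant, and vanishes at z,
   thus everywhere.  Monotone convergence then also gives the normalising constants.  Positive
   recurrence enters only through the existence of \<pi>, which the hypotheses provide directly. *)

lemma stochastic_matrix_nonneg: "stochastic_matrix P \<Longrightarrow> 0 \<le> P x y"
  by (simp add: stochastic_matrix_def)

lemma stochastic_matrix_has_sum: "stochastic_matrix P \<Longrightarrow> (P x has_sum 1) UNIV"
  by (simp add: stochastic_matrix_def)

lemma stochastic_matrix_summable: "stochastic_matrix P \<Longrightarrow> P x summable_on UNIV"
  using stochastic_matrix_has_sum[of P x] by (auto simp: summable_on_def)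

lemma stochastic_matrix_infsum: "stochastic_matrix P \<Longrightarrow> (\<Sum>\<^sub>\<infinity>y. P x y) = 1"
  using stochastic_matrix_has_sum by (rule infsumI)

lemma stochastic_matrix_sum_le_1: "stochastic_matrix P \<Longrightarrow> finite F \<Longrightarrow> (\<Sum>y\<in>F. P x y) \<le> 1"
  using finite_sum_le_infsum[OF stochastic_matrix_summable[of P x], of F]
  by (simp add: stochastic_matrix_infsum stochastic_matrix_nonneg)

lemma stochastic_matrix_le_1: "stochastic_matrix P \<Longrightarrow> P x y \<le> 1"
  using stochastic_matrix_sum_le_1[of P "{y}" x] by simp

lemma stochastic_matrix_eq_0_outside:
  assumes "stochastic_matrix P" "finite F" "(\<Sum>y\<in>F. P x y) = 1" "u \<notin> F"
  shows "P x u = 0"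
  using stochastic_matrix_sum_le_1[of P "insert u F" x] stochastic_matrix_nonneg[of P x u] assms
  by simp

lemma mpow_nonneg: "stochastic_matrix P \<Longrightarrow> 0 \<le> mpow P n x y"
  by (induction n arbitrary: y) (auto intro!: infsum_nonneg simp: stochastic_matrix_nonneg)

lemma mpow_Suc_posD:
  assumes "stochastic_matrix P" "0 < mpow P (Suc n) x y"
  shows "\<exists>w. 0 < mpow P n x w \<and> 0 < P w y"
proof (rule ccontr)
  assume "\<not> ?thesis"
  then have "mpow P n x w * P w y = 0" for w
    using mpow_nonneg stochastic_matrix_nonneg assms(1) by (metis less_eq_real_def mult_eq_0_iff)
  then have "(\<lambda>w. mpow P n x w * P w y) = (\<lambda>_. 0)" by auto
  then have "mpow P (Suc n) x y = 0" by simp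
  then show False using assms(2) by simp
qed

lemma summable_on_mult_stochastic_column:
  assumes "stochastic_matrix P" "g summable_on UNIV" "\<And>u. 0 \<le> g u"
  shows "(\<lambda>u. g u * P u y) summable_on UNIV"
  using assms
  by (intro summable_on_comparison_test[OF assms(2)])
     (auto simp: stochastic_matrix_nonneg stochastic_matrix_le_1 mult_left_le)

lemma
  assumes st: "stochastic_matrix P" and g: "g summable_on UNIV" "\<And>u. 0 \<le> g u"
  shows summable_on_mult_stochastic: "(\<lambda>y. \<Sum>\<^sub>\<infinity>u. g u * P u y) summable_on UNIV"
    and infsum_mult_stochastic: "(\<Sum>\<^sub>\<infinity>y. \<Sum>\<^sub>\<infinity>u. g u * P u y) = (\<Sum>\<^sub>\<infinity>u. g u)"
proof -
  have row: "((\<lambda>y. g u * P u y) has_sum g u) UNIV" for u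
    using has_sum_cmult_right[OF stochastic_matrix_has_sum[OF st], of "g u"] by simp
  have prod: "(\<lambda>(u, y). g u * P u y) summable_on UNIV \<times> UNIV"
    by (rule summable_on_SigmaI[OF _ g(1)]) (use row g(2) st in \<open>auto simp: stochastic_matrix_nonneg\<close>)
  have swapped: "(\<lambda>(y, u). g u * P u y) summable_on UNIV \<times> UNIV"
    by (subst summable_on_swap) (use prod in simp)
  show "(\<lambda>y. \<Sum>\<^sub>\<infinity>u. g u * P u y) summable_on UNIV"
    using summable_on_Sigma_banach[OF swapped] by simp
  have "(\<Sum>\<^sub>\<infinity>y. \<Sum>\<^sub>\<infinity>u. g u * P u y) = (\<Sum>\<^sub>\<infinity>u. \<Sum>\<^sub>\<infinity>y. g u * P u y)"
    using infsum_swap_banach[of "\<lambda>y u. g u * P u y"] swapped by simp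
  also have "\<dots> = (\<Sum>\<^sub>\<infinity>u. g u)"
    by (rule infsum_cong) (rule infsumI[OF row])
  finally show "(\<Sum>\<^sub>\<infinity>y. \<Sum>\<^sub>\<infinity>u. g u * P u y) = (\<Sum>\<^sub>\<infinity>u. g u)" .
qed

lemma superinvariant_measure_eq:
  assumes st: "stochastic_matrix P" and g: "g summable_on UNIV" "\<And>u. 0 \<le> g u"
    and super: "\<And>y. g y \<le> (\<Sum>\<^sub>\<infinity>u. g u * P u y)"
  shows "(\<Sum>\<^sub>\<infinity>u. g u * P u y) = g y"
proof (rule ccontr)
  assume "(\<Sum>\<^sub>\<infinity>u. g u * P u y) \<noteq> g y"
  then have "g y < (\<Sum>\<^sub>\<infinity>u. g u * P u y)" using super[of y] by simp
  then have "(\<Sum>\<^sub>\<infinity>u. g u) < (\<Sum>\<^sub>\<infinity>y. \<Sum>\<^sub>\<infinity>u. g u * P u y)"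
    using has_sum_strict_mono[OF has_sum_infsum[OF g(1)]
        has_sum_infsum[OF summable_on_mult_stochastic[OF st g]]] super by blast
  then show False using infsum_mult_stochastic[OF st g] by simp
qed

lemma superharmonic_min_closed:
  assumes st: "stochastic_matrix P" and "finite I"
    and super: "(\<Sum>u\<in>I. P a u * f u) \<le> f a"
    and m: "m < 0" "\<And>u. u \<in> I \<Longrightarrow> m \<le> f u" "f a = m" and "0 < P a b"
  shows "b \<in> I \<and> f b = m"
proof -
  define s where "s = (\<Sum>u\<in>I. P a u)"
  define T where "T = (\<Sum>u\<in>I. P a u * (f u - m))"
  have "(\<Sum>u\<in>I. P a u * f u) = T + m * s"
    by (simp add: T_def s_def algebra_simps sum.distrib sum_distrib_left sum_subtractf)
  moreover have "0 \<le> T"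
    unfolding T_def using m(2) st by (intro sum_nonneg mult_nonneg_nonneg) (auto simp: stochastic_matrix_nonneg)
  moreover have "m \<le> m * s"
    using m(1) stochastic_matrix_sum_le_1[OF st \<open>finite I\<close>] by (simp add: s_def mult_le_cancel_left1)
  ultimately have "T = 0" "m * s = m" using super m(3) by linarith+
  then have "s = 1" using m(1) by simp
  have "b \<in> I"
    using stochastic_matrix_eq_0_outside[OF st \<open>finite I\<close>, of a b] \<open>s = 1\<close> \<open>0 < P a b\<close>
    by (auto simp: s_def)
  moreover have "P a b * (f b - m) = 0"
    using \<open>T = 0\<close> \<open>b \<in> I\<close> m(2) st \<open>finite I\<close> unfolding T_def
    by (subst (asm) sum_nonneg_eq_0_iff) (auto simp: stochastic_matrix_nonneg)
  ultimately show ?thesis using \<open>0 < P a b\<close> by simp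
qed

section \<open>Inverses of \<open>I - B\<close> on a finite index set\<close>

definition is_I_minus_inverse :: "'a set \<Rightarrow> ('a \<Rightarrow> 'a \<Rightarrow> real) \<Rightarrow> ('a \<Rightarrow> 'a \<Rightarrow> real) \<Rightarrow> bool" where
  "is_I_minus_inverse I B M \<longleftrightarrow>
      (\<forall>x\<in>I. \<forall>y\<in>I. (\<Sum>u\<in>I. ((if x = u then 1 else 0) - B x u) * M u y) = (if x = y then 1 else 0)) \<and>
      (\<forall>x\<in>I. \<forall>y\<in>I. (\<Sum>u\<in>I. M x u * ((if u = y then 1 else 0) - B u y)) = (if x = y then 1 else 0)) \<and>
      (\<forall>x y. (x \<notin> I \<or> y \<notin> I) \<longrightarrow> M x y = 0)"

lemma sum_mult_delta_right: "finite I \<Longrightarrow> y \<in> I \<Longrightarrow> (\<Sum>u\<in>I. f u * (if u = y then 1 else 0)) = (f y :: real)"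
  by (subst sum.cong[OF refl, of _ _ "\<lambda>u. if u = y then f u else 0"]) auto

lemma sum_mult_delta_left: "finite I \<Longrightarrow> x \<in> I \<Longrightarrow> (\<Sum>u\<in>I. (if x = u then 1 else 0) * f u) = (f x :: real)"
  by (subst sum.cong[OF refl, of _ _ "\<lambda>u. if x = u then f u else 0"]) auto

lemma sum_swap_mult:
  "(\<Sum>x\<in>I. (\<Sum>y\<in>J. a y * b y x) * (c x :: real)) = (\<Sum>y\<in>J. a y * (\<Sum>x\<in>I. b y x * c x))"
  unfolding sum_distrib_left sum_distrib_right mult.assoc by (rule sum.swap)

lemma is_I_minus_inverse_unique:
  assumes "finite I" "is_I_minus_inverse I B M" "is_I_minus_inverse I B M'"
  shows "M' = M"
proof (intro ext)
  fix x y
  show "M' x y = M x y"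
  proof (cases "x \<in> I \<and> y \<in> I")
    case True
    have "M' x y = (\<Sum>u\<in>I. M' x u * (if u = y then 1 else 0))"
      using True \<open>finite I\<close> by (simp add: sum_mult_delta_right)
    also have "\<dots> = (\<Sum>u\<in>I. M' x u * (\<Sum>v\<in>I. ((if u = v then 1 else 0) - B u v) * M v y))"
      using True assms(2) by (simp add: is_I_minus_inverse_def)
    also have "\<dots> = (\<Sum>v\<in>I. (\<Sum>u\<in>I. M' x u * ((if u = v then 1 else 0) - B u v)) * M v y)"
      by (rule sum_swap_mult[symmetric])
    also have "\<dots> = M x y"
      using True assms(1,3) by (simp add: is_I_minus_inverse_def sum_mult_delta_left)
    finally show ?thesis .
  qed (use assms in \<open>auto simp: is_I_minus_inverse_def\<close>)
qed

lemma inv_I_minus_eqI: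
  assumes "finite I" "is_I_minus_inverse I B M"
  shows "inv_I_minus I B = M"
  unfolding inv_I_minus_def is_I_minus_inverse_def[symmetric]
  using assms is_I_minus_inverse_unique by blast

lemma is_I_minus_inverse_row_eq:
  assumes "finite I" "is_I_minus_inverse I B M" "x \<in> I"
  shows "(\<Sum>u\<in>I. \<nu> u * M u x) = \<nu> x + (\<Sum>y\<in>I. (\<Sum>u\<in>I. \<nu> u * M u y) * B y x)"
proof -
  define w where "w y = (\<Sum>u\<in>I. \<nu> u * M u y)" for y
  have "(\<Sum>y\<in>I. w y * ((if y = x then 1 else 0) - B y x))
      = (\<Sum>u\<in>I. \<nu> u * (\<Sum>y\<in>I. M u y * ((if y = x then 1 else 0) - B y x)))"
    unfolding w_def by (rule sum_swap_mult)
  also have "\<dots> = \<nu> x"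
    using assms by (simp add: is_I_minus_inverse_def sum_mult_delta_right)
  moreover have "(\<Sum>y\<in>I. w y * ((if y = x then 1 else 0) - B y x)) = w x - (\<Sum>y\<in>I. w y * B y x)"
    using assms by (simp add: right_diff_distrib sum_subtractf sum_mult_delta_right)
  ultimately show ?thesis by (simp add: w_def)
qed

lemma is_I_minus_inverse_row_le:
  assumes "finite I" "is_I_minus_inverse I B M" "\<And>x y. 0 \<le> M x y"
    and super: "\<And>x. x \<in> I \<Longrightarrow> \<nu> x + (\<Sum>y\<in>I. v y * B y x) \<le> v x" and "y \<in> I"
  shows "(\<Sum>u\<in>I. \<nu> u * M u y) \<le> v y"
proof -
  define r where "r x = v x - (\<Sum>w\<in>I. v w * B w x)" for x
  have "(\<Sum>u\<in>I. \<nu> u * M u y) \<le> (\<Sum>u\<in>I. r u * M u y)"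
    using super assms(3) by (intro sum_mono mult_right_mono) (fastforce simp: r_def)
  also have "\<dots> = (\<Sum>u\<in>I. (\<Sum>w\<in>I. v w * ((if w = u then 1 else 0) - B w u)) * M u y)"
    using assms(1) by (intro sum.cong) (auto simp: r_def algebra_simps sum_subtractf sum_mult_delta_right)
  also have "\<dots> = (\<Sum>w\<in>I. v w * (\<Sum>u\<in>I. ((if w = u then 1 else 0) - B w u) * M u y))"
    by (rule sum_swap_mult)
  also have "\<dots> = v y"
    using assms by (simp add: is_I_minus_inverse_def sum_mult_delta_right)
  finally show ?thesis .
qed

lemma is_I_minus_inverse_exists_nat:
  fixes B :: "nat \<Rightarrow> nat \<Rightarrow> real"
  assumes kernel: "\<And>f k. (\<And>i. i < n \<Longrightarrow> f i = (\<Sum>j<n. B i j * f j)) \<Longrightarrow> k < n \<Longrightarrow> f k = 0"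
  shows "\<exists>M. is_I_minus_inverse {..<n} B M"
proof -
  define Q :: "real mat" where "Q = mat n n (\<lambda>(i, j). (if i = j then 1 else 0) - B i j)"
  have Q: "Q \<in> carrier_mat n n" by (simp add: Q_def)
  have "det Q \<noteq> 0"
  proof
    assume "det Q = 0"
    then obtain v where v: "v \<in> carrier_vec n" "v \<noteq> 0\<^sub>v n" "Q *\<^sub>v v = 0\<^sub>v n"
      using det_0_iff_vec_prod_zero[OF Q] by blast
    have harmonic: "v $ i = (\<Sum>j<n. B i j * v $ j)" if "i < n" for i
    proof -
      have "0 = (Q *\<^sub>v v) $ i" using v that by simp
      also have "\<dots> = (\<Sum>j<n. ((if i = j then 1 else 0) - B i j) * v $ j)"
        using that v(1) by (simp add: Q_def scalar_prod_def atLeast0LessThan)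
      also have "\<dots> = v $ i - (\<Sum>j<n. B i j * v $ j)"
        using that by (simp add: left_diff_distrib sum_subtractf sum_mult_delta_left)
      finally show ?thesis by simp
    qed
    have "v $ k = 0" if "k < n" for k
      using kernel[of "\<lambda>j. v $ j", OF harmonic that] .
    then have "v = 0\<^sub>v n" using v(1) by (intro eq_vecI) auto
    with v(2) show False ..
  qed
  then obtain R where R: "R \<in> carrier_mat n n" "Q * R = 1\<^sub>m n" "R * Q = 1\<^sub>m n"
    using det_non_zero_imp_unit[OF Q, of undefined] by (auto simp: Units_def ring_mat_def)
  define M where "M i j = (if i < n \<and> j < n then R $$ (i, j) else 0)" for i j
  have "is_I_minus_inverse {..<n} B M"
    unfolding is_I_minus_inverse_def
  proof (intro conjI ballI allI impI)
    fix i j assume ij: "i \<in> {..<n}" "j \<in> {..<n}"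
    have "(\<Sum>u<n. ((if i = u then 1 else 0) - B i u) * M u j) = (Q * R) $$ (i, j)"
      using R(1) ij by (simp add: Q_def M_def scalar_prod_def atLeast0LessThan)
    then show "(\<Sum>u\<in>{..<n}. ((if i = u then 1 else 0) - B i u) * M u j) = (if i = j then 1 else 0)"
      using R(2) ij by simp
    have "(\<Sum>u<n. M i u * ((if u = j then 1 else 0) - B u j)) = (R * Q) $$ (i, j)"
      using R(1) ij by (simp add: Q_def M_def scalar_prod_def atLeast0LessThan)
    then show "(\<Sum>u\<in>{..<n}. M i u * ((if u = j then 1 else 0) - B u j)) = (if i = j then 1 else 0)"
      using R(3) ij by simp
  next
    fix i j :: nat assume "i \<notin> {..<n} \<or> j \<notin> {..<n}"
    then show "M i j = 0" by (auto simp: M_def)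
  qed
  then show ?thesis by blast
qed

lemma is_I_minus_inverse_reindex:
  assumes e: "bij_betw e J I" and M: "is_I_minus_inverse J (\<lambda>k l. B (e k) (e l)) M"
  shows "is_I_minus_inverse I B
    (\<lambda>x y. if x \<in> I \<and> y \<in> I then M (inv_into J e x) (inv_into J e y) else 0)" (is "is_I_minus_inverse I B ?M")
proof -
  have eq_iff: "e k = e m \<longleftrightarrow> k = m" if "k \<in> J" "m \<in> J" for k m
    using e that by (auto simp: bij_betw_def inj_on_eq_iff)
  have e_in: "e k \<in> I" and inv_e: "inv_into J e (e k) = k" if "k \<in> J" for k
    using e that by (auto simp: bij_betw_apply bij_betw_inv_into_left)
  have reindex: "(\<Sum>u\<in>I. g u) = (\<Sum>m\<in>J. g (e m))" for g :: "_ \<Rightarrow> real"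
    using sum.reindex_bij_betw[OF e, symmetric] .
  show ?thesis
    unfolding is_I_minus_inverse_def
  proof (intro conjI ballI allI impI)
    fix x y assume "x \<in> I" "y \<in> I"
    then obtain k l where kl: "k \<in> J" "l \<in> J" "x = e k" "y = e l"
      using e unfolding bij_betw_def by blast
    have "(\<Sum>u\<in>I. ((if x = u then 1 else 0) - B x u) * ?M u y)
        = (\<Sum>m\<in>J. ((if k = m then 1 else 0) - B (e k) (e m)) * M m l)"
      unfolding reindex using kl by (intro sum.cong) (auto simp: eq_iff e_in inv_e)
    then show "(\<Sum>u\<in>I. ((if x = u then 1 else 0) - B x u) * ?M u y) = (if x = y then 1 else 0)"
      using M kl by (simp add: is_I_minus_inverse_def eq_iff)
    have "(\<Sum>u\<in>I. ?M x u * ((if u = y then 1 else 0) - B u y))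
        = (\<Sum>m\<in>J. M k m * ((if m = l then 1 else 0) - B (e m) (e l)))"
      unfolding reindex using kl by (intro sum.cong) (auto simp: eq_iff e_in inv_e)
    then show "(\<Sum>u\<in>I. ?M x u * ((if u = y then 1 else 0) - B u y)) = (if x = y then 1 else 0)"
      using M kl by (simp add: is_I_minus_inverse_def eq_iff)
  qed auto
qed

lemma is_I_minus_inverse_exists:
  assumes "finite I"
    and kernel: "\<And>f x. (\<And>y. y \<in> I \<Longrightarrow> f y = (\<Sum>u\<in>I. B y u * f u)) \<Longrightarrow> x \<in> I \<Longrightarrow> f x = 0"
  shows "\<exists>M. is_I_minus_inverse I B M"
proof -
  define n where "n = card I"
  obtain e where e: "bij_betw e {..<n} I"
    using ex_bij_betw_nat_finite[OF assms(1)] by (auto simp: n_def atLeast0LessThan)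
  have "\<exists>M. is_I_minus_inverse {..<n} (\<lambda>k l. B (e k) (e l)) M"
  proof (rule is_I_minus_inverse_exists_nat)
    fix f k assume harmonic: "\<And>i. i < n \<Longrightarrow> f i = (\<Sum>j<n. B (e i) (e j) * f j)" and "k < n"
    define g where "g x = f (inv_into {..<n} e x)" for x
    have g_e: "g (e j) = f j" if "j < n" for j
      using e that by (simp add: g_def bij_betw_inv_into_left)
    have "g y = (\<Sum>u\<in>I. B y u * g u)" if "y \<in> I" for y
    proof -
      obtain i where i: "i < n" "y = e i" using e \<open>y \<in> I\<close> unfolding bij_betw_def by auto
      have "(\<Sum>u\<in>I. B y u * g u) = (\<Sum>j<n. B (e i) (e j) * f j)"
        using i by (simp add: sum.reindex_bij_betw[OF e, symmetric] g_e)
      then show ?thesis using harmonic[OF i(1)] i g_e by simp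
    qed
    then have "g (e k) = 0" using kernel e \<open>k < n\<close> by (simp add: bij_betw_apply)
    then show "f k = 0" using g_e \<open>k < n\<close> by simp
  qed
  then show ?thesis using is_I_minus_inverse_reindex[OF e] by blast
qed

lemma stationary_distributionD:
  assumes "stationary_distribution P \<pi>"
  shows stationary_distribution_nonneg: "0 \<le> \<pi> x"
    and stationary_distribution_summable: "\<pi> summable_on UNIV"
    and stationary_distribution_infsum: "(\<Sum>\<^sub>\<infinity>u. \<pi> u) = 1"
    and stationary_distribution_invariant: "(\<Sum>\<^sub>\<infinity>u. \<pi> u * P u y) = \<pi> y"
proof -
  have "(\<pi> has_sum 1) UNIV" and "\<pi> y = (\<Sum>\<^sub>\<infinity>u. \<pi> u * P u y)"
    using assms unfolding stationary_distribution_def by blast+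
  then show "\<pi> summable_on UNIV" "(\<Sum>\<^sub>\<infinity>u. \<pi> u) = 1" "(\<Sum>\<^sub>\<infinity>u. \<pi> u * P u y) = \<pi> y"
    by (auto simp: summable_on_def infsumI)
  show "0 \<le> \<pi> x" using assms unfolding stationary_distribution_def by blast
qed

section \<open>Irreducible chains\<close>

locale irreducible_stochastic_matrix =
  fixes P :: "'a \<Rightarrow> 'a \<Rightarrow> real"
  assumes stochastic: "stochastic_matrix P" and irreducible: "irreducible_chain P"
begin

lemma irreducible_closed_setD:
  assumes closed: "\<And>a b. a \<in> S \<Longrightarrow> 0 < P a b \<Longrightarrow> b \<in> S" and "x \<in> S"
  shows "y \<in> S"
proof -
  have "0 < mpow P n x y \<Longrightarrow> y \<in> S" for n
  proof (induction n arbitrary: y)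
    case 0
    then show ?case using \<open>x \<in> S\<close> by (simp split: if_splits)
  next
    case (Suc n)
    then show ?case using mpow_Suc_posD[OF stochastic] closed by blast
  qed
  then show ?thesis using irreducible by (meson irreducible_chain_def)
qed

lemma subinvariant_measure_pos:
  assumes g: "g summable_on UNIV" "\<And>u. 0 \<le> g u"
    and sub: "\<And>y. (\<Sum>\<^sub>\<infinity>u. g u * P u y) \<le> g y" and "0 < g x"
  shows "0 < g y"
proof -
  have "0 < g b" if "0 < g a" "0 < P a b" for a b
  proof -
    have "g a * P a b \<le> (\<Sum>\<^sub>\<infinity>u. g u * P u b)"
      using finite_sum_le_infsum[OF summable_on_mult_stochastic_column[OF stochastic g], of "{a}" b]
      by (simp add: g(2) stochastic stochastic_matrix_nonneg)
    moreover have "0 < g a * P a b" using that by simp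
    ultimately show ?thesis using sub[of b] by linarith
  qed
  then show ?thesis
    using irreducible_closed_setD[of "{u. 0 < g u}"] \<open>0 < g x\<close> by blast
qed

lemma stationary_distribution_pos:
  assumes \<pi>: "stationary_distribution P \<pi>"
  shows "0 < \<pi> x"
proof -
  have "\<exists>x0. \<pi> x0 \<noteq> 0"
  proof (rule ccontr)
    assume "\<nexists>x0. \<pi> x0 \<noteq> 0"
    then show False using stationary_distribution_infsum[OF \<pi>] by simp
  qed
  then obtain x0 where "\<pi> x0 \<noteq> 0" ..
  then have "0 < \<pi> x0" using stationary_distribution_nonneg[OF \<pi>, of x0] by simp
  then show ?thesis
    using subinvariant_measure_pos stationary_distributionD[OF \<pi>] by simp
qed

lemma dominated_subinvariant_eq_invariant:
  assumes H: "H summable_on UNIV" "\<And>y. (\<Sum>\<^sub>\<infinity>u. H u * P u y) = H y"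
    and h: "\<And>y. 0 \<le> h y" "\<And>y. h y \<le> H y" "h z = H z"
    and sub: "\<And>y. y \<noteq> z \<Longrightarrow> (\<Sum>\<^sub>\<infinity>u. h u * P u y) \<le> h y"
  shows "h = H"
proof -
  define g where "g y = H y - h y" for y
  have g_nonneg: "0 \<le> g y" for y using h by (simp add: g_def)
  have H_nonneg: "0 \<le> H y" for y using h(1)[of y] h(2)[of y] by linarith
  have h_summable: "h summable_on UNIV"
    using summable_on_comparison_test[OF H(1)] h by blast
  have g_summable: "g summable_on UNIV"
    using summable_on_comparison_test[OF H(1)] g_nonneg H_nonneg h by (simp add: g_def)
  have H_split: "(\<Sum>\<^sub>\<infinity>u. h u * P u y) + (\<Sum>\<^sub>\<infinity>u. g u * P u y) = H y" for y
  proof -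
    have "(\<Sum>\<^sub>\<infinity>u. h u * P u y) + (\<Sum>\<^sub>\<infinity>u. g u * P u y) = (\<Sum>\<^sub>\<infinity>u. h u * P u y + g u * P u y)"
      by (intro infsum_add[symmetric] summable_on_mult_stochastic_column stochastic h_summable g_summable h g_nonneg)
    also have "\<dots> = (\<Sum>\<^sub>\<infinity>u. H u * P u y)"
      by (simp add: g_def algebra_simps)
    finally show ?thesis using H(2) by simp
  qed
  have super: "g y \<le> (\<Sum>\<^sub>\<infinity>u. g u * P u y)" for y
  proof (cases "y = z")
    case True
    have "0 \<le> (\<Sum>\<^sub>\<infinity>u. g u * P u y)"
      using g_nonneg stochastic by (simp add: infsum_nonneg stochastic_matrix_nonneg)
    then show ?thesis using True h(3) by (simp add: g_def)
  next
    case False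
    then show ?thesis using H_split[of y] sub[of y] unfolding g_def by linarith
  qed
  have "\<not> 0 < g x" for x
  proof
    assume "0 < g x"
    moreover have "(\<Sum>\<^sub>\<infinity>u. g u * P u y) \<le> g y" for y
      using superinvariant_measure_eq[OF stochastic g_summable g_nonneg super] by simp
    ultimately have "0 < g z"
      using subinvariant_measure_pos[OF g_summable g_nonneg] by blast
    then show False using h(3) by (simp add: g_def)
  qed
  then show "h = H" using h(2) by (simp add: g_def fun_eq_iff not_less order_antisym)
qed

lemma superharmonic_nonneg:
  assumes "finite I" "z \<notin> I"
    and super: "\<And>x. x \<in> I \<Longrightarrow> (\<Sum>u\<in>I. P x u * f u) \<le> f x" and "x \<in> I"
  shows "0 \<le> f x"
proof (rule ccontr)
  assume "\<not> 0 \<le> f x"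
  define m where "m = Min (f ` I)"
  have m_le: "m \<le> f u" if "u \<in> I" for u
    using \<open>finite I\<close> that by (simp add: m_def)
  have "m < 0" using m_le[OF \<open>x \<in> I\<close>] \<open>\<not> 0 \<le> f x\<close> by simp
  have "m \<in> f ` I"
    unfolding m_def using \<open>finite I\<close> \<open>x \<in> I\<close> by (intro Min_in) auto
  then obtain x0 where "x0 \<in> I" "f x0 = m" by blast
  have "b \<in> {u \<in> I. f u = m}" if "a \<in> {u \<in> I. f u = m}" "0 < P a b" for a b
    using superharmonic_min_closed[OF stochastic \<open>finite I\<close> super[of a] \<open>m < 0\<close> m_le] that by auto
  then have "z \<in> {u \<in> I. f u = m}"
    using irreducible_closed_setD \<open>x0 \<in> I\<close> \<open>f x0 = m\<close> by blast
  with \<open>z \<notin> I\<close> show False by simp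
qed

lemma harmonic_eq_0:
  assumes "finite I" "z \<notin> I"
    and harmonic: "\<And>x. x \<in> I \<Longrightarrow> f x = (\<Sum>u\<in>I. P x u * f u)" and "x \<in> I"
  shows "f x = 0"
proof -
  have "0 \<le> f x"
    using superharmonic_nonneg[OF assms(1,2) _ \<open>x \<in> I\<close>] harmonic by simp
  moreover have "0 \<le> - f x"
    using superharmonic_nonneg[OF assms(1,2) _ \<open>x \<in> I\<close>, of "\<lambda>u. - f u"] harmonic
    by (simp add: sum_negf)
  ultimately show ?thesis by simp
qed

lemma is_I_minus_inverse_inv_I_minus:
  assumes "finite I" "z \<notin> I"
  shows "is_I_minus_inverse I P (inv_I_minus I P)"
proof -
  obtain M where "is_I_minus_inverse I P M"
    using is_I_minus_inverse_exists[OF \<open>finite I\<close>] harmonic_eq_0[OF assms(1,2)] by blast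
  then show ?thesis using inv_I_minus_eqI[OF \<open>finite I\<close>] by simp
qed

lemma inv_I_minus_nonneg:
  assumes "finite I" "z \<notin> I"
  shows "0 \<le> inv_I_minus I P x y"
proof -
  let ?M = "inv_I_minus I P"
  have M: "is_I_minus_inverse I P ?M"
    by (rule is_I_minus_inverse_inv_I_minus[OF assms])
  show ?thesis
  proof (cases "x \<in> I \<and> y \<in> I")
    case True
    have "(\<Sum>u\<in>I. P a u * ?M u y) \<le> ?M a y" if "a \<in> I" for a
    proof -
      have "(\<Sum>u\<in>I. ((if a = u then 1 else 0) - P a u) * ?M u y) = ?M a y - (\<Sum>u\<in>I. P a u * ?M u y)"
        using that \<open>finite I\<close> by (simp add: left_diff_distrib sum_subtractf sum_mult_delta_left)
      then show ?thesis using M True that by (simp add: is_I_minus_inverse_def split: if_splits)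
    qed
    with True show ?thesis
      using superharmonic_nonneg[OF assms(1,2), where f = "\<lambda>a. ?M a y"] by blast
  qed (use M in \<open>auto simp: is_I_minus_inverse_def\<close>)
qed

end

section \<open>The truncation approximation\<close>

text \<open>The paper's row vector \<open>\<nu>(I - B)\<^sup>-\<^sup>1\<close> on \<open>A - {z}\<close>, extended by the value \<open>1\<close> at \<open>z\<close>: the expected
  number of visits to \<open>y\<close> during an excursion from \<open>z\<close> of the chain killed on leaving \<open>A\<close>.\<close>

definition trunc_occupation :: "('a \<Rightarrow> 'a \<Rightarrow> real) \<Rightarrow> 'a \<Rightarrow> 'a set \<Rightarrow> 'a \<Rightarrow> real" where
  "trunc_occupation P z A y =
     (if y = z then 1 else (\<Sum>u\<in>A - {z}. P z u * inv_I_minus (A - {z}) P u y))"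

lemma trunc_approx_eq_trunc_occupation:
  assumes "finite A" "z \<in> A"
  shows "trunc_approx P z A x =
    (if x \<in> A then trunc_occupation P z A x / (\<Sum>y\<in>A. trunc_occupation P z A y) else 0)"
proof -
  have "(\<Sum>y\<in>A. trunc_occupation P z A y)
      = 1 + (\<Sum>y\<in>A - {z}. \<Sum>u\<in>A - {z}. P z u * inv_I_minus (A - {z}) P u y)"
    using assms by (simp add: sum.remove trunc_occupation_def)
  then show ?thesis
    using assms by (auto simp: trunc_approx_def trunc_occupation_def Let_def)
qed

context irreducible_stochastic_matrix
begin

lemma trunc_occupation_nonneg: "finite A \<Longrightarrow> 0 \<le> trunc_occupation P z A y"
  unfolding trunc_occupation_def
  by (auto intro!: sum_nonneg mult_nonneg_nonneg inv_I_minus_nonneg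
      simp: stochastic stochastic_matrix_nonneg)

lemma trunc_occupation_outside:
  assumes "finite A" "z \<in> A" "y \<notin> A"
  shows "trunc_occupation P z A y = 0"
  using is_I_minus_inverse_inv_I_minus[of "A - {z}" z] assms
  by (auto simp: trunc_occupation_def is_I_minus_inverse_def)

lemma trunc_occupation_eq:
  assumes "finite A" "z \<in> A" "y \<in> A - {z}"
  shows "trunc_occupation P z A y = (\<Sum>u\<in>A. trunc_occupation P z A u * P u y)"
proof -
  have "(\<Sum>u\<in>A. trunc_occupation P z A u * P u y)
      = P z y + (\<Sum>u\<in>A - {z}. trunc_occupation P z A u * P u y)"
    using assms by (simp add: sum.remove trunc_occupation_def)
  also have "\<dots> = trunc_occupation P z A y"
    using is_I_minus_inverse_row_eq[OF _ is_I_minus_inverse_inv_I_minus, of "A - {z}" z y "P z"] assms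
    by (auto simp: trunc_occupation_def intro!: sum.cong)
  finally show ?thesis ..
qed

lemma trunc_occupation_le:
  assumes "finite A" "z \<in> A" "v z = 1"
    and super: "\<And>x. x \<in> A - {z} \<Longrightarrow> (\<Sum>u\<in>A. v u * P u x) \<le> v x" and "y \<in> A"
  shows "trunc_occupation P z A y \<le> v y"
proof (cases "y = z")
  case False
  have "P z x + (\<Sum>u\<in>A - {z}. v u * P u x) \<le> v x" if "x \<in> A - {z}" for x
    using super[OF that] assms(1-3) by (simp add: sum.remove)
  then show ?thesis
    using is_I_minus_inverse_row_le[OF _ is_I_minus_inverse_inv_I_minus, of "A - {z}" z "P z" v y]
      inv_I_minus_nonneg[of "A - {z}" z] False assms
    by (simp add: trunc_occupation_def)
qed (simp add: trunc_occupation_def assms)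

lemma trunc_occupation_mono:
  assumes "finite A'" "A \<subseteq> A'" "z \<in> A"
  shows "trunc_occupation P z A y \<le> trunc_occupation P z A' y"
proof (cases "y \<in> A")
  case True
  have fin: "finite A" using assms finite_subset by blast
  show ?thesis
  proof (rule trunc_occupation_le[OF fin \<open>z \<in> A\<close> _ _ True])
    fix x assume x: "x \<in> A - {z}"
    have "(\<Sum>u\<in>A. trunc_occupation P z A' u * P u x) \<le> (\<Sum>u\<in>A'. trunc_occupation P z A' u * P u x)"
      using assms by (intro sum_mono2)
        (auto intro!: mult_nonneg_nonneg trunc_occupation_nonneg simp: stochastic stochastic_matrix_nonneg)
    also have "\<dots> = trunc_occupation P z A' x"
      by (rule trunc_occupation_eq[symmetric]) (use assms x in auto)
    finally show "(\<Sum>u\<in>A. trunc_occupation P z A' u * P u x) \<le> trunc_occupation P z A' x" .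
  qed (simp add: trunc_occupation_def)
next
  case False
  moreover have "finite A" using assms finite_subset by blast
  ultimately show ?thesis
    using assms trunc_occupation_outside[of A z y] trunc_occupation_nonneg[of A'] by simp
qed

lemma trunc_occupation_le_stationary:
  assumes \<pi>: "stationary_distribution P \<pi>" and "finite A" "z \<in> A"
  shows "trunc_occupation P z A y \<le> \<pi> y / \<pi> z"
proof (cases "y \<in> A")
  case True
  have pos: "0 < \<pi> u" for u by (rule stationary_distribution_pos[OF \<pi>])
  show ?thesis
  proof (rule trunc_occupation_le[OF assms(2,3) _ _ True])
    fix x
    have "(\<Sum>u\<in>A. \<pi> u * P u x) \<le> (\<Sum>\<^sub>\<infinity>u. \<pi> u * P u x)"
      using \<open>finite A\<close>
      by (intro finite_sum_le_infsum summable_on_mult_stochastic_column[OF stochastic]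
          stationary_distribution_summable[OF \<pi>] stationary_distribution_nonneg[OF \<pi>])
        (auto intro!: mult_nonneg_nonneg stationary_distribution_nonneg[OF \<pi>]
          stochastic_matrix_nonneg[OF stochastic])
    then show "(\<Sum>u\<in>A. \<pi> u / \<pi> z * P u x) \<le> \<pi> x / \<pi> z"
      using pos[of z] stationary_distribution_invariant[OF \<pi>, of x] by (simp add: sum_divide_distrib[symmetric] divide_right_mono)
  qed (use pos[of z] in simp)
next
  case False
  then show ?thesis
    using trunc_occupation_outside[OF assms(2,3)] stationary_distribution_pos[OF \<pi>] by (simp add: less_imp_le)
qed

end

lemma eventually_subset_incseq:
  assumes "incseq B" "(\<Union>n. B n) = UNIV" "finite F"
  shows "\<forall>\<^sub>F n in sequentially. F \<subseteq> B n"
proof -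
  have "\<forall>\<^sub>F n in sequentially. x \<in> B n" for x
  proof -
    obtain m where "x \<in> B m" using assms(2) by blast
    then show ?thesis using assms(1) unfolding eventually_sequentially incseq_def by blast
  qed
  then show ?thesis unfolding subset_eq using assms(3) by (intro eventually_ball_finite) auto
qed

lemma tendsto_sum_incseq_sets:
  fixes f :: "nat \<Rightarrow> 'a \<Rightarrow> real"
  assumes B: "incseq B" "(\<Union>n. B n) = UNIV" "\<And>n. finite (B n)"
    and f: "\<And>n y. 0 \<le> f n y" "\<And>y. incseq (\<lambda>n. f n y)" "\<And>y. (\<lambda>n. f n y) \<longlonglongrightarrow> g y"
    and g: "g summable_on UNIV"
  shows "(\<lambda>n. \<Sum>y\<in>B n. f n y) \<longlonglongrightarrow> (\<Sum>\<^sub>\<infinity>y. g y)"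
proof -
  define c where "c n = (\<Sum>y\<in>B n. f n y)" for n
  have f_le: "f n y \<le> g y" for n y using incseq_le[OF f(2,3)] .
  have g_nonneg: "0 \<le> g y" for y using f(1)[of 0 y] f_le[of 0 y] by linarith
  have "c m \<le> c n" if "m \<le> n" for m n
  proof -
    have "c m \<le> (\<Sum>y\<in>B m. f n y)"
      unfolding c_def using f(2) that by (intro sum_mono) (simp add: incseq_def)
    also have "\<dots> \<le> c n"
      unfolding c_def using B that f(1) by (intro sum_mono2) (auto simp: incseq_def)
    finally show ?thesis .
  qed
  then have c_incseq: "incseq c" by (rule incseq_SucI[OF lift_Suc_mono_le]) auto
  have c_le: "c n \<le> (\<Sum>\<^sub>\<infinity>y. g y)" for n
  proof -
    have "c n \<le> (\<Sum>y\<in>B n. g y)" unfolding c_def by (intro sum_mono f_le)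
    also have "\<dots> \<le> (\<Sum>\<^sub>\<infinity>y. g y)" using B(3) g g_nonneg by (intro finite_sum_le_infsum) auto
    finally show ?thesis .
  qed
  have "bdd_above (range c)" by (rule bdd_aboveI2) (rule c_le)
  then have c_lim: "c \<longlonglongrightarrow> (SUP n. c n)" using c_incseq by (rule LIMSEQ_incseq_SUP)
  have "(\<Sum>\<^sub>\<infinity>y. g y) \<le> (SUP n. c n)"
  proof (rule infsum_le_finite_sums[OF g])
    fix F :: "'a set" assume "finite F"
    have "\<forall>\<^sub>F n in sequentially. (\<Sum>y\<in>F. f n y) \<le> c n"
      using eventually_subset_incseq[OF B(1,2) \<open>finite F\<close>]
      by eventually_elim (unfold c_def, intro sum_mono2 B(3) f(1))
    then show "(\<Sum>y\<in>F. g y) \<le> (SUP n. c n)"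
      by (intro tendsto_le[OF trivial_limit_sequentially c_lim tendsto_sum[OF f(3)]])
  qed
  moreover have "(SUP n. c n) \<le> (\<Sum>\<^sub>\<infinity>y. g y)" by (intro cSUP_least c_le) simp
  ultimately have "c \<longlonglongrightarrow> (\<Sum>\<^sub>\<infinity>y. g y)" using c_lim by (metis order_antisym)
  then show ?thesis by (simp add: c_def [abs_def])
qed

section \<open>Convergence along an exhausting sequence of truncation sets\<close>

locale truncation_sequence = irreducible_stochastic_matrix +
  fixes \<pi> :: "'a \<Rightarrow> real" and z :: 'a and B :: "nat \<Rightarrow> 'a set"
  assumes stationary: "stationary_distribution P \<pi>"
    and finite_B: "\<And>n. finite (B n)" and incseq_B: "incseq B"
    and z_in_B0: "z \<in> B 0" and exhausting: "(\<Union>n. B n) = UNIV"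
begin

lemma z_in_B: "z \<in> B n"
  using z_in_B0 incseq_B by (auto simp: incseq_def)

lemma incseq_trunc_occupation: "incseq (\<lambda>n. trunc_occupation P z (B n) y)"
  using incseq_B by (auto simp: incseq_def intro!: trunc_occupation_mono finite_B z_in_B)

lemma trunc_occupation_limit_subinvariant:
  assumes lim: "\<And>y. (\<lambda>n. trunc_occupation P z (B n) y) \<longlonglongrightarrow> h y"
    and "h summable_on UNIV" "y \<noteq> z"
  shows "(\<Sum>\<^sub>\<infinity>u. h u * P u y) \<le> h y"
proof (rule infsum_le_finite_sums)
  have "0 \<le> h u" for u
    by (rule LIMSEQ_le_const[OF lim]) (simp add: trunc_occupation_nonneg finite_B)
  then show "(\<lambda>u. h u * P u y) summable_on UNIV"
    by (intro summable_on_mult_stochastic_column[OF stochastic \<open>h summable_on UNIV\<close>])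
next
  fix F :: "'a set" assume "finite F"
  then have "\<forall>\<^sub>F n in sequentially. insert y F \<subseteq> B n"
    by (intro eventually_subset_incseq[OF incseq_B exhausting]) simp
  then have "\<forall>\<^sub>F n in sequentially. (\<Sum>u\<in>F. trunc_occupation P z (B n) u * P u y) \<le> trunc_occupation P z (B n) y"
  proof eventually_elim
    case (elim n)
    have "(\<Sum>u\<in>F. trunc_occupation P z (B n) u * P u y) \<le> (\<Sum>u\<in>B n. trunc_occupation P z (B n) u * P u y)"
      using elim finite_B by (intro sum_mono2)
        (auto intro!: mult_nonneg_nonneg trunc_occupation_nonneg stochastic_matrix_nonneg[OF stochastic])
    also have "\<dots> = trunc_occupation P z (B n) y"
      using elim \<open>y \<noteq> z\<close> by (intro trunc_occupation_eq[symmetric] finite_B z_in_B) auto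
    finally show ?case .
  qed
  moreover have "(\<lambda>n. \<Sum>u\<in>F. trunc_occupation P z (B n) u * P u y) \<longlonglongrightarrow> (\<Sum>u\<in>F. h u * P u y)"
    by (intro tendsto_sum tendsto_mult_right lim)
  ultimately show "(\<Sum>u\<in>F. h u * P u y) \<le> h y"
    using tendsto_le[OF trivial_limit_sequentially lim] by blast
qed

lemma trunc_occupation_tendsto: "(\<lambda>n. trunc_occupation P z (B n) y) \<longlonglongrightarrow> \<pi> y / \<pi> z"
proof -
  define H where "H y = \<pi> y / \<pi> z" for y
  define h where "h y = (SUP n. trunc_occupation P z (B n) y)" for y
  have pos: "0 < \<pi> z" by (rule stationary_distribution_pos[OF stationary])
  have le_H: "trunc_occupation P z (B n) y \<le> H y" for n y
    unfolding H_def by (intro trunc_occupation_le_stationary stationary finite_B z_in_B)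
  have lim: "(\<lambda>n. trunc_occupation P z (B n) y) \<longlonglongrightarrow> h y" for y
    unfolding h_def by (rule LIMSEQ_incseq_SUP[OF bdd_aboveI2[OF le_H] incseq_trunc_occupation])
  have H_has_sum: "(H has_sum 1 / \<pi> z) UNIV"
    unfolding H_def
    using has_sum_infsum[OF stationary_distribution_summable[OF stationary]]
      stationary_distribution_infsum[OF stationary]
    by (intro has_sum_divide_const) simp
  have H_summable: "H summable_on UNIV" using H_has_sum by (auto simp: summable_on_def)
  have H_invariant: "(\<Sum>\<^sub>\<infinity>u. H u * P u y) = H y" for y
  proof -
    have "(\<Sum>\<^sub>\<infinity>u. H u * P u y) = (\<Sum>\<^sub>\<infinity>u. \<pi> u * P u y * inverse (\<pi> z))"
      by (simp add: H_def divide_inverse mult_ac)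
    also have "\<dots> = H y"
      by (simp add: infsum_cmult_left' stationary_distribution_invariant[OF stationary] H_def divide_inverse)
    finally show ?thesis .
  qed
  have h_nonneg: "0 \<le> h y" for y
    by (rule LIMSEQ_le_const[OF lim]) (simp add: trunc_occupation_nonneg finite_B)
  have h_le_H: "h y \<le> H y" for y
    by (rule LIMSEQ_le_const2[OF lim]) (simp add: le_H)
  have h_z: "h z = H z"
    using lim[of z] pos by (simp add: H_def trunc_occupation_def LIMSEQ_const_iff)
  have "h summable_on UNIV"
    using summable_on_comparison_test[OF H_summable] h_le_H h_nonneg by blast
  then have "h = H"
    using dominated_subinvariant_eq_invariant[OF H_summable H_invariant h_nonneg h_le_H h_z]
      trunc_occupation_limit_subinvariant[OF lim] by blast
  then show ?thesis using lim by (simp add: H_def)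
qed

lemma sum_trunc_occupation_tendsto:
  "(\<lambda>n. \<Sum>y\<in>B n. trunc_occupation P z (B n) y) \<longlonglongrightarrow> 1 / \<pi> z"
proof -
  have "(\<lambda>n. \<Sum>y\<in>B n. trunc_occupation P z (B n) y) \<longlonglongrightarrow> (\<Sum>\<^sub>\<infinity>y. \<pi> y / \<pi> z)"
  proof (rule tendsto_sum_incseq_sets[OF incseq_B exhausting finite_B])
    show "(\<lambda>y. \<pi> y / \<pi> z) summable_on UNIV"
      using summable_on_cmult_left[OF stationary_distribution_summable[OF stationary], of "inverse (\<pi> z)"]
      by (simp add: divide_inverse)
  qed (simp_all add: trunc_occupation_nonneg finite_B incseq_trunc_occupation trunc_occupation_tendsto)
  moreover have "(\<Sum>\<^sub>\<infinity>y. \<pi> y / \<pi> z) = 1 / \<pi> z"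
    using infsum_cmult_left'[of \<pi> "inverse (\<pi> z)" UNIV] stationary_distribution_infsum[OF stationary]
    by (simp add: divide_inverse)
  ultimately show ?thesis by simp
qed

lemma trunc_approx_tendsto: "(\<lambda>n. trunc_approx P z (B n) x) \<longlonglongrightarrow> \<pi> x"
proof -
  have pos: "0 < \<pi> z" by (rule stationary_distribution_pos[OF stationary])
  have "\<forall>\<^sub>F n in sequentially. {x} \<subseteq> B n"
    by (rule eventually_subset_incseq[OF incseq_B exhausting]) simp
  then have "\<forall>\<^sub>F n in sequentially. trunc_occupation P z (B n) x / (\<Sum>y\<in>B n. trunc_occupation P z (B n) y)
      = trunc_approx P z (B n) x"
    by eventually_elim (simp add: trunc_approx_eq_trunc_occupation finite_B z_in_B)
  moreover have "(\<lambda>n. trunc_occupation P z (B n) x / (\<Sum>y\<in>B n. trunc_occupation P z (B n) y))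
      \<longlonglongrightarrow> (\<pi> x / \<pi> z) / (1 / \<pi> z)"
    using pos by (intro tendsto_divide trunc_occupation_tendsto sum_trunc_occupation_tendsto) simp
  ultimately show ?thesis using pos by (simp add: tendsto_cong)
qed

end

theorem proposition1:
  fixes P :: "'a::countable \<Rightarrow> 'a \<Rightarrow> real"
    and \<pi> :: "'a \<Rightarrow> real"
    and z :: 'a
    and A :: "nat \<Rightarrow> 'a set"
  assumes "stochastic_matrix P"
    and "irreducible_chain P"
    and "positive_recurrent_chain P"
    and "stationary_distribution P \<pi>"
    and "\<And>n. n \<ge> 1 \<Longrightarrow> finite (A n)"
    and "z \<in> A 1"
    and "\<And>n. n \<ge> 1 \<Longrightarrow> A n \<subseteq> A (Suc n)"
    and "(\<Union>n\<in>{1..}. A n) = UNIV"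
  shows "\<forall>x. (\<lambda>n. trunc_approx P z (A n) x) \<longlonglongrightarrow> \<pi> x"
proof -
  have "x \<in> (\<Union>n. A (Suc n))" for x
  proof -
    obtain m where "m \<ge> 1" "x \<in> A m" using assms(8) by blast
    then show ?thesis by (intro UN_I[of "m - 1"]) auto
  qed
  then have "(\<Union>n. A (Suc n)) = UNIV" by blast
  then interpret truncation_sequence P \<pi> z "\<lambda>n. A (Suc n)"
    using assms(1-4,6) by unfold_locales (auto intro!: assms(5) incseq_SucI assms(7))
  show ?thesis
    using trunc_approx_tendsto filterlim_sequentially_Suc by blast
qed

end
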